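(* In the setting where SA 1 contracts with ESC $B$ and SA 2 with ESC $A$ ($W>L>0$, $\Lambda,v>0$, $0<q_B<q_A\le1$, $\alpha\in[0,1)$), if $\frac{W-L}{L}\ge\frac{q_B\alpha^2+q_B\alpha-2q_A\alpha^2}{2q_A(1-\alpha)^2}$ and the equilibrium has $\lambda_1+\lambda_2<\Lambda$, then the unique second-stage pricing equilibrium is $$p_1=\frac{v\Big(\frac{2q_Bq_A\alpha^2-q_Bq_A\alpha^3-q_B^2\alpha^2}{W-L}+\frac{(1-\alpha)^2(2-\alpha)q_Aq_B}{L}\Big)}{4q_A\big[\frac{\alpha^2}{W-L}+\frac{(1-\alpha)^2}{L}\big]-\frac{q_B\alpha^2}{W-L}},\qquad p_2=\frac{v\Big(\frac{2q_A^2\alpha^2-q_Aq_B\alpha^2-q_Aq_B\alpha}{W-L}+\frac{2q_A^2(1-\alpha)^2}{L}\Big)}{4q_A\big[\frac{\alpha^2}{W-L}+\frac{(1-\alpha)^2}{L}\big]-\frac{q_B\alpha^2}{W-L}}.$$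
   Context: Expected subscriber payoffs: SA 1 (ESC $B$): $q_Bv-q_B\alpha\frac{\alpha\lambda_1+\lambda_2}{W-L}-q_B\frac{(1-\alpha)^2\lambda_1}{L}-p_1$; SA 2 (ESC $A$): $q_Av-q_B\frac{\alpha\lambda_1}{W-L}-q_A\frac{\lambda_2}{W-L}-p_2$. Third stage: Wardrop equilibrium ($\lambda_i\ge0$, $\lambda_1+\lambda_2\le\Lambda$; if $\lambda_i>0$ SA $i$'s subscriber payoff is nonnegative and at least the other's; if $\lambda_1+\lambda_2<\Lambda$ the largest payoff is $0$). Second stage: Nash equilibrium in prices $p_i\ge0$, SA $i$ maximizing $p_i\lambda_i$. *)

theory Defs
  imports Complex_Main
begin

definition payoff1 :: "real \<Rightarrow> real \<Rightarrow> real \<Rightarrow> real \<Rightarrow> real \<Rightarrow> real \<Rightarrow> real \<Rightarrow> real \<Rightarrow> real \<Rightarrow> real" where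
  "payoff1 v qA qB \<alpha> W L l1 l2 p1 =
     qB * v - qB * \<alpha> * ((\<alpha> * l1 + l2) / (W - L)) - qB * ((1 - \<alpha>)^2 * l1 / L) - p1"

definition payoff2 :: "real \<Rightarrow> real \<Rightarrow> real \<Rightarrow> real \<Rightarrow> real \<Rightarrow> real \<Rightarrow> real \<Rightarrow> real \<Rightarrow> real \<Rightarrow> real" where
  "payoff2 v qA qB \<alpha> W L l1 l2 p2 =
     qA * v - qB * (\<alpha> * l1 / (W - L)) - qA * (l2 / (W - L)) - p2"

definition wardrop :: "real \<Rightarrow> real \<Rightarrow> real \<Rightarrow> real \<Rightarrow> real \<Rightarrow> real \<Rightarrow> real \<Rightarrow> real \<Rightarrow> real \<Rightarrow> real \<Rightarrow> real \<Rightarrow> bool" where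
  "wardrop v qA qB \<alpha> W L \<Lambda> p1 p2 l1 l2 \<longleftrightarrow>
     (let U1 = payoff1 v qA qB \<alpha> W L l1 l2 p1; U2 = payoff2 v qA qB \<alpha> W L l1 l2 p2 in
       l1 \<ge> 0 \<and> l2 \<ge> 0 \<and> l1 + l2 \<le> \<Lambda> \<and>
       (l1 > 0 \<longrightarrow> U1 \<ge> 0 \<and> U1 \<ge> U2) \<and>
       (l2 > 0 \<longrightarrow> U2 \<ge> 0 \<and> U2 \<ge> U1) \<and>
       (l1 + l2 < \<Lambda> \<longrightarrow> max U1 U2 = 0))"

definition price_eq :: "real \<Rightarrow> real \<Rightarrow> real \<Rightarrow> real \<Rightarrow> real \<Rightarrow> real \<Rightarrow> real \<Rightarrow> real \<Rightarrow> real \<Rightarrow> real \<Rightarrow> real \<Rightarrow> bool" where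
  "price_eq v qA qB \<alpha> W L \<Lambda> p1 p2 l1 l2 \<longleftrightarrow>
     p1 \<ge> 0 \<and> p2 \<ge> 0 \<and> wardrop v qA qB \<alpha> W L \<Lambda> p1 p2 l1 l2 \<and>
     (\<forall>p1' m1 m2. p1' \<ge> 0 \<longrightarrow> wardrop v qA qB \<alpha> W L \<Lambda> p1' p2 m1 m2 \<longrightarrow> p1' * m1 \<le> p1 * l1) \<and>
     (\<forall>p2' m1 m2. p2' \<ge> 0 \<longrightarrow> wardrop v qA qB \<alpha> W L \<Lambda> p1 p2' m1 m2 \<longrightarrow> p2' * m2 \<le> p2 * l2)"

end

theory Submission
  imports Defs
begin

text \<open>Both utilities are affine in the flows: \<open>U\<^sub>1 = a\<^sub>1 - c\<lambda>\<^sub>1 - b\<lambda>\<^sub>2 - p\<^sub>1\<close> and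
  \<open>U\<^sub>2 = a\<^sub>2 - b\<lambda>\<^sub>1 - d\<lambda>\<^sub>2 - p\<^sub>2\<close> with \<open>det = cd - b\<^sup>2 > 0\<close>. If the market is not covered,
  both utilities vanish at an interior Wardrop flow, and a price increase \<open>det\<cdot>s\<close> by SA 1 is
  absorbed by the flow shift \<open>(-ds, bs)\<close> (by SA 2: \<open>(bs, -cs)\<close>), which keeps both utilities at
  zero. The deviating revenue is then a quadratic in \<open>s\<close> maximised at \<open>s = 0\<close>, whence
  \<open>det\<cdot>\<lambda>\<^sub>1 = d p\<^sub>1\<close> and \<open>det\<cdot>\<lambda>\<^sub>2 = c p\<^sub>2\<close>; with \<open>U\<^sub>1 = U\<^sub>2 = 0\<close> this is a linear system for the prices.
  The corner \<open>\<lambda>\<^sub>1 = 0\<close> is excluded by \<open>\<alpha> < 1\<close>; in the corner \<open>\<lambda>\<^sub>2 = 0\<close> the threshold on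
  \<open>(W - L)/L\<close> forces \<open>p\<^sub>2 = 0\<close> and the same equations, via a one-sided deviation.\<close>

lemma eventually_at_zero_pos:
  fixes f :: "real \<Rightarrow> real"
  assumes "continuous (at 0) f" and "0 < f 0"
  shows "\<forall>\<^sub>F s in at 0. 0 < f s"
  using assms order_tendstoD(1) unfolding continuous_at by blast

lemma eventually_at_right_zero:
  "\<forall>\<^sub>F s in at (0::real). P s \<Longrightarrow> \<forall>\<^sub>F s in at_right 0. 0 < s \<and> P s"
  by (simp add: eventually_at_split eventually_conj eventually_at_right_less)

lemma eventually_at_left_zero:
  "\<forall>\<^sub>F s in at (0::real). P s \<Longrightarrow> \<forall>\<^sub>F s in at_left 0. s < 0 \<and> P s"
  by (auto simp: eventually_at_split eventually_at_filter elim: eventually_mono)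

lemma product_local_max_at_right:
  fixes p l \<Delta> d :: real
  assumes "\<forall>\<^sub>F s in at_right 0. (p + \<Delta>*s) * (l - d*s) \<le> p*l"
  shows "\<Delta>*l \<le> d*p"
proof (rule ccontr)
  assume "\<not> \<Delta>*l \<le> d*p"
  then have "\<forall>\<^sub>F s in at 0. 0 < (\<Delta>*l - d*p) - \<Delta>*d*s"
    by (intro eventually_at_zero_pos) (auto intro!: continuous_intros)
  then have "\<forall>\<^sub>F s in at_right 0. 0 < s \<and> 0 < (\<Delta>*l - d*p) - \<Delta>*d*s"
    by (rule eventually_at_right_zero)
  with assms have "\<forall>\<^sub>F s in at_right (0::real). False"
  proof eventually_elim
    case (elim s)
    have "(p + \<Delta>*s) * (l - d*s) - p*l = s * ((\<Delta>*l - d*p) - \<Delta>*d*s)"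
      by (simp add: algebra_simps)
    also have "\<dots> > 0" using elim by simp
    finally show False using elim by simp
  qed
  then show False by (simp add: trivial_limit_at_right_real)
qed

lemma product_local_max_at_left:
  fixes p l \<Delta> d :: real
  assumes "\<forall>\<^sub>F s in at_left 0. (p + \<Delta>*s) * (l - d*s) \<le> p*l"
  shows "d*p \<le> \<Delta>*l"
proof -
  have "\<forall>\<^sub>F s in at_right 0. (p + (-\<Delta>)*s) * (l - (-d)*s) \<le> p*l"
    using assms by (simp add: at_left_minus eventually_filtermap)
  from product_local_max_at_right[OF this] show ?thesis by simp
qed

lemma product_local_max_at_zero:
  fixes p l \<Delta> d :: real
  assumes "0 \<le> p" and "0 < l" and "0 < \<Delta>"
    and max: "\<forall>\<^sub>F s in at 0. 0 \<le> p + \<Delta>*s \<longrightarrow> (p + \<Delta>*s) * (l - d*s) \<le> p*l"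
  shows "\<Delta>*l = d*p"
proof -
  from eventually_at_right_zero[OF max]
  have "\<forall>\<^sub>F s in at_right 0. (p + \<Delta>*s) * (l - d*s) \<le> p*l"
    by eventually_elim (use assms(1,3) in \<open>auto intro: add_nonneg_nonneg\<close>)
  then have right: "\<Delta>*l \<le> d*p" by (rule product_local_max_at_right)
  moreover have "0 < \<Delta>*l" using assms by simp
  ultimately have "0 < p" using \<open>0 \<le> p\<close> by (cases "p = 0") auto
  then have "\<forall>\<^sub>F s in at 0. 0 < p + \<Delta>*s"
    by (intro eventually_at_zero_pos) (auto intro!: continuous_intros)
  with max have "\<forall>\<^sub>F s in at 0. (p + \<Delta>*s) * (l - d*s) \<le> p*l"
    by eventually_elim simp
  then have "d*p \<le> \<Delta>*l" by (auto simp: eventually_at_split intro: product_local_max_at_left)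
  with right show ?thesis by simp
qed

locale linear_duopoly =
  fixes a1 a2 c b d :: real
  assumes c_pos: "0 < c" and d_pos: "0 < d" and b_nonneg: "0 \<le> b" and cross_sq_less: "b^2 < c*d"
begin

definition util1 :: "real \<Rightarrow> real \<Rightarrow> real \<Rightarrow> real" where
  "util1 m1 m2 p = a1 - c*m1 - b*m2 - p"

definition util2 :: "real \<Rightarrow> real \<Rightarrow> real \<Rightarrow> real" where
  "util2 m1 m2 p = a2 - b*m1 - d*m2 - p"

definition flow_eq :: "real \<Rightarrow> real \<Rightarrow> real \<Rightarrow> real \<Rightarrow> real \<Rightarrow> bool" where
  "flow_eq \<Lambda> p1 p2 m1 m2 \<longleftrightarrow>
     (let U1 = util1 m1 m2 p1; U2 = util2 m1 m2 p2 in
       m1 \<ge> 0 \<and> m2 \<ge> 0 \<and> m1 + m2 \<le> \<Lambda> \<and>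
       (m1 > 0 \<longrightarrow> U1 \<ge> 0 \<and> U1 \<ge> U2) \<and>
       (m2 > 0 \<longrightarrow> U2 \<ge> 0 \<and> U2 \<ge> U1) \<and>
       (m1 + m2 < \<Lambda> \<longrightarrow> max U1 U2 = 0))"

definition price_equilibrium :: "real \<Rightarrow> real \<Rightarrow> real \<Rightarrow> real \<Rightarrow> real \<Rightarrow> bool" where
  "price_equilibrium \<Lambda> p1 p2 l1 l2 \<longleftrightarrow>
     p1 \<ge> 0 \<and> p2 \<ge> 0 \<and> flow_eq \<Lambda> p1 p2 l1 l2 \<and>
     (\<forall>p1' m1 m2. p1' \<ge> 0 \<longrightarrow> flow_eq \<Lambda> p1' p2 m1 m2 \<longrightarrow> p1' * m1 \<le> p1 * l1) \<and>
     (\<forall>p2' m1 m2. p2' \<ge> 0 \<longrightarrow> flow_eq \<Lambda> p1 p2' m1 m2 \<longrightarrow> p2' * m2 \<le> p2 * l2)"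

abbreviation det :: real where
  "det \<equiv> c*d - b^2"

lemma det_pos: "0 < det"
  using cross_sq_less by simp

lemma flow_eq_indifferent:
  assumes "0 \<le> m1" "0 \<le> m2" "m1 + m2 < \<Lambda>" "util1 m1 m2 p1 = 0" "util2 m1 m2 p2 = 0"
  shows "flow_eq \<Lambda> p1 p2 m1 m2"
  using assms by (simp add: flow_eq_def)

lemma flow_eq_single_provider:
  assumes "0 < m1" "m1 < \<Lambda>" "util1 m1 0 p1 = 0" "util2 m1 0 p2 \<le> 0"
  shows "flow_eq \<Lambda> p1 p2 m1 0"
  using assms by (simp add: flow_eq_def max_def)

lemma flow_eq_slackD:
  assumes "flow_eq \<Lambda> p1 p2 m1 m2" and "m1 + m2 < \<Lambda>"
  shows "0 \<le> m1" "0 \<le> m2" "util1 m1 m2 p1 \<le> 0" "util2 m1 m2 p2 \<le> 0"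
    and "0 < m1 \<Longrightarrow> util1 m1 m2 p1 = 0" "0 < m2 \<Longrightarrow> util2 m1 m2 p2 = 0"
  using assms by (auto simp: flow_eq_def Let_def max_def split: if_splits)

lemma util_shift1:
  "util1 (m1 - d*s) (m2 + b*s) (p + det*s) = util1 m1 m2 p"
  "util2 (m1 - d*s) (m2 + b*s) q = util2 m1 m2 q"
  by (simp_all add: util1_def util2_def algebra_simps power2_eq_square)

lemma util_shift2:
  "util1 (m1 + b*s) (m2 - c*s) q = util1 m1 m2 q"
  "util2 (m1 + b*s) (m2 - c*s) (p + det*s) = util2 m1 m2 p"
  by (simp_all add: util1_def util2_def algebra_simps power2_eq_square)

lemma shift1_revenue_le:
  assumes "price_equilibrium \<Lambda> p1 p2 l1 l2"
    and "util1 m1 m2 p = 0" "util2 m1 m2 p2 = 0"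
    and "0 \<le> m1 - d*s" "0 \<le> m2 + b*s" "m1 - d*s + (m2 + b*s) < \<Lambda>" "0 \<le> p + det*s"
  shows "(p + det*s) * (m1 - d*s) \<le> p1 * l1"
proof -
  have "flow_eq \<Lambda> (p + det*s) p2 (m1 - d*s) (m2 + b*s)"
    using assms(2-6) by (intro flow_eq_indifferent) (simp_all add: util_shift1)
  then show ?thesis using assms(1,7) unfolding price_equilibrium_def by blast
qed

lemma shift2_revenue_le:
  assumes "price_equilibrium \<Lambda> p1 p2 l1 l2"
    and "util1 m1 m2 p1 = 0" "util2 m1 m2 p = 0"
    and "0 \<le> m1 + b*s" "0 \<le> m2 - c*s" "m1 + b*s + (m2 - c*s) < \<Lambda>" "0 \<le> p + det*s"
  shows "(p + det*s) * (m2 - c*s) \<le> p2 * l2"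
proof -
  have "flow_eq \<Lambda> p1 (p + det*s) (m1 + b*s) (m2 - c*s)"
    using assms(2-6) by (intro flow_eq_indifferent) (simp_all add: util_shift2)
  then show ?thesis using assms(1,7) unfolding price_equilibrium_def by blast
qed

lemma interior_equilibrium_foc:
  assumes eq: "price_equilibrium \<Lambda> p1 p2 l1 l2"
    and slack: "l1 + l2 < \<Lambda>" and "0 < l1" "0 < l2"
  shows "det*l1 = d*p1" "det*l2 = c*p2"
proof -
  have flow: "flow_eq \<Lambda> p1 p2 l1 l2" and "0 \<le> p1" "0 \<le> p2"
    using eq by (simp_all add: price_equilibrium_def)
  have U1: "util1 l1 l2 p1 = 0" and U2: "util2 l1 l2 p2 = 0"
    using flow_eq_slackD[OF flow slack] \<open>0 < l1\<close> \<open>0 < l2\<close> by simp_all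
  have "\<forall>\<^sub>F s in at 0. 0 < l1 - d*s \<and> 0 < l2 + b*s \<and> 0 < l1 + b*s \<and> 0 < l2 - c*s
      \<and> 0 < \<Lambda> - (l1 + l2) + (d - b)*s \<and> 0 < \<Lambda> - (l1 + l2) + (c - b)*s"
    using assms(2-4)
    by (intro eventually_conj eventually_at_zero_pos) (auto intro!: continuous_intros)
  then have "(\<forall>\<^sub>F s in at 0. 0 \<le> p1 + det*s \<longrightarrow> (p1 + det*s) * (l1 - d*s) \<le> p1*l1) \<and>
             (\<forall>\<^sub>F s in at 0. 0 \<le> p2 + det*s \<longrightarrow> (p2 + det*s) * (l2 - c*s) \<le> p2*l2)"
    unfolding eventually_conj_iff[symmetric]
    by eventually_elim
      (intro conjI impI shift1_revenue_le[OF eq U1 U2] shift2_revenue_le[OF eq U1 U2];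
       simp add: algebra_simps)
  then show "det*l1 = d*p1" "det*l2 = c*p2"
    using product_local_max_at_zero \<open>0 \<le> p1\<close> \<open>0 \<le> p2\<close> assms(3,4) det_pos by blast+
qed

end

text \<open>For the ESC game, \<open>cross_less\<close> amounts to \<open>\<alpha> < 1\<close> and \<open>regular\<close> to the threshold on
  \<open>(W - L)/L\<close>.\<close>

locale regular_linear_duopoly = linear_duopoly +
  assumes a1_pos: "0 < a1" and a2_pos: "0 < a2"
    and cross_less: "b*a2 < d*a1"
    and regular: "b*(d*a1 + b*a2) \<le> 2*c*d*a2"
begin

lemma regular_strict: "b*a1 < 2*c*a2"
proof (cases "b = 0")
  case True
  then show ?thesis using c_pos a2_pos by simp
next
  case False
  then have "0 < b^2*a2" using a2_pos by simp
  then have "d*(b*a1) < d*(2*c*a2)" using regular by (simp add: algebra_simps power2_eq_square)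
  then show ?thesis using d_pos by simp
qed

lemma equilibrium_not_second_only:
  assumes eq: "price_equilibrium \<Lambda> p1 p2 l1 l2" and slack: "l1 + l2 < \<Lambda>"
    and l1: "l1 = 0" and "0 < l2"
  shows False
proof -
  have flow: "flow_eq \<Lambda> p1 p2 l1 l2" and "0 \<le> p2"
    using eq by (simp_all add: price_equilibrium_def)
  define p where "p = a1 - b*l2"
  have U1: "util1 0 l2 p = 0" by (simp add: util1_def p_def)
  have U2: "util2 0 l2 p2 = 0" using flow_eq_slackD(6)[OF flow slack \<open>0 < l2\<close>] l1 by simp
  then have "d*l2 \<le> a2" using \<open>0 \<le> p2\<close> by (simp add: util2_def)
  then have "b*(d*l2) \<le> b*a2" using b_nonneg by (rule mult_left_mono)
  then have "d*(b*l2) < d*a1" using cross_less by (simp add: algebra_simps)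
  then have "0 < p" using d_pos by (simp add: p_def)
  then have "\<forall>\<^sub>F s in at 0. 0 < l2 + b*s \<and> 0 < \<Lambda> - l2 + (d - b)*s \<and> 0 < p + det*s"
    using \<open>0 < l2\<close> slack l1
    by (intro eventually_conj eventually_at_zero_pos) (auto intro!: continuous_intros)
  then have "\<forall>\<^sub>F s in at_left 0. s < 0 \<and> 0 < l2 + b*s \<and> 0 < \<Lambda> - l2 + (d - b)*s \<and> 0 < p + det*s"
    by (rule eventually_at_left_zero)
  then have "\<forall>\<^sub>F s in at_left 0. (p + det*s) * (0 - d*s) \<le> p*0"
  proof eventually_elim
    case (elim s)
    have "(p + det*s) * (0 - d*s) \<le> p1 * l1"
      by (rule shift1_revenue_le[OF eq U1 U2])
        (use elim d_pos in \<open>auto simp: algebra_simps mult_le_0_iff\<close>)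
    then show ?case using l1 by simp
  qed
  from product_local_max_at_left[OF this] \<open>0 < p\<close> d_pos show False
    by (simp add: mult_le_0_iff)
qed

lemma equilibrium_not_empty:
  assumes eq: "price_equilibrium \<Lambda> p1 p2 l1 l2" and slack: "l1 + l2 < \<Lambda>"
    and l1: "l1 = 0" and l2: "l2 = 0"
  shows False
proof -
  have flow: "flow_eq \<Lambda> p1 p2 l1 l2" using eq by (simp add: price_equilibrium_def)
  have "a2 \<le> p2" using flow_eq_slackD(4)[OF flow slack] l1 l2 by (simp add: util2_def)
  have "\<forall>\<^sub>F s in at 0. 0 < \<Lambda> - s \<and> 0 < a1 - c*s"
    using slack l1 l2 a1_pos
    by (intro eventually_conj eventually_at_zero_pos) (auto intro!: continuous_intros)
  then have "\<forall>\<^sub>F s in at_right 0. 0 < s \<and> 0 < \<Lambda> - s \<and> 0 < a1 - c*s"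
    by (rule eventually_at_right_zero)
  then have "\<forall>\<^sub>F s in at_right (0::real). False"
  proof eventually_elim
    case (elim s)
    have "0 \<le> b*s" using elim b_nonneg by simp
    then have "flow_eq \<Lambda> (a1 - c*s) p2 s 0"
      using elim \<open>a2 \<le> p2\<close> by (intro flow_eq_single_provider) (auto simp: util1_def util2_def)
    moreover have "0 \<le> a1 - c*s" using elim by simp
    ultimately have "(a1 - c*s) * s \<le> p1 * l1"
      using eq unfolding price_equilibrium_def by blast
    moreover have "0 < (a1 - c*s) * s" using elim by simp
    ultimately show False using l1 by simp
  qed
  then show False by (simp add: trivial_limit_at_right_real)
qed

lemma equilibrium_first_flow_pos:
  assumes eq: "price_equilibrium \<Lambda> p1 p2 l1 l2" and slack: "l1 + l2 < \<Lambda>"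
  shows "0 < l1"
proof -
  have flow: "flow_eq \<Lambda> p1 p2 l1 l2" using eq by (simp add: price_equilibrium_def)
  show ?thesis
    using flow_eq_slackD(1,2)[OF flow slack]
      equilibrium_not_second_only[OF eq slack] equilibrium_not_empty[OF eq slack]
    by fastforce
qed

lemma boundary_util2_zero_price_nonpos:
  assumes eq: "price_equilibrium \<Lambda> p1 p2 l1 l2" and slack: "l1 + l2 < \<Lambda>" and l2: "l2 = 0"
  shows "util2 l1 0 0 \<le> 0"
proof (rule ccontr)
  define K where "K = util2 l1 0 0"
  assume "\<not> util2 l1 0 0 \<le> 0"
  then have "0 < K" by (simp add: K_def)
  have flow: "flow_eq \<Lambda> p1 p2 l1 l2" using eq by (simp add: price_equilibrium_def)
  have "0 < l1" using eq slack by (rule equilibrium_first_flow_pos)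
  then have U1: "util1 l1 0 p1 = 0" using flow_eq_slackD(5)[OF flow slack] l2 by simp
  have UK: "util2 l1 0 K = 0" by (simp add: util2_def K_def)
  have "\<forall>\<^sub>F s in at 0. 0 < l1 + b*s \<and> 0 < \<Lambda> - l1 + (c - b)*s \<and> 0 < K + det*s"
    using \<open>0 < l1\<close> \<open>0 < K\<close> slack l2
    by (intro eventually_conj eventually_at_zero_pos) (auto intro!: continuous_intros)
  then have "\<forall>\<^sub>F s in at_left 0. s < 0 \<and> 0 < l1 + b*s \<and> 0 < \<Lambda> - l1 + (c - b)*s \<and> 0 < K + det*s"
    by (rule eventually_at_left_zero)
  then have "\<forall>\<^sub>F s in at_left 0. (K + det*s) * (0 - c*s) \<le> K*0"
  proof eventually_elim
    case (elim s)
    have "(K + det*s) * (0 - c*s) \<le> p2 * l2"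
      by (rule shift2_revenue_le[OF eq U1 UK])
        (use elim c_pos in \<open>auto simp: algebra_simps mult_le_0_iff\<close>)
    then show ?case using l2 by simp
  qed
  from product_local_max_at_left[OF this] \<open>0 < K\<close> c_pos show False
    by (simp add: mult_le_0_iff)
qed

lemma boundary_util2_zero:
  assumes eq: "price_equilibrium \<Lambda> p1 p2 l1 l2" and slack: "l1 + l2 < \<Lambda>" and l2: "l2 = 0"
  shows "util2 l1 0 p2 = 0"
proof (rule ccontr)
  assume "util2 l1 0 p2 \<noteq> 0"
  have flow: "flow_eq \<Lambda> p1 p2 l1 l2" and "0 \<le> p1"
    using eq by (simp_all add: price_equilibrium_def)
  have "0 < l1" using eq slack by (rule equilibrium_first_flow_pos)
  then have U1: "util1 l1 0 p1 = 0" using flow_eq_slackD(5)[OF flow slack] l2 by simp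
  have "util2 l1 0 p2 < 0" using flow_eq_slackD(4)[OF flow slack] l2 \<open>util2 l1 0 p2 \<noteq> 0\<close> by simp
  then have "\<forall>\<^sub>F s in at 0. 0 < l1 - s \<and> 0 < \<Lambda> - l1 + s \<and> 0 < - util2 l1 0 p2 - b*s"
    using \<open>0 < l1\<close> slack l2
    by (intro eventually_conj eventually_at_zero_pos) (auto intro!: continuous_intros)
  then have "\<forall>\<^sub>F s in at 0. 0 \<le> p1 + c*s \<longrightarrow> (p1 + c*s) * (l1 - 1*s) \<le> p1*l1"
  proof eventually_elim
    case (elim s)
    have "util1 (l1 - s) 0 (p1 + c*s) = util1 l1 0 p1" by (simp add: util1_def algebra_simps)
    then have "flow_eq \<Lambda> (p1 + c*s) p2 (l1 - s) 0"
      using elim U1 by (intro flow_eq_single_provider) (auto simp: util2_def algebra_simps)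
    then show ?case using eq unfolding price_equilibrium_def by auto
  qed
  then have "c*l1 = 1*p1"
    using product_local_max_at_zero \<open>0 \<le> p1\<close> \<open>0 < l1\<close> c_pos by blast
  then have "2*c*util2 l1 0 0 = 2*c*a2 - b*a1"
    using U1 by (simp add: util1_def util2_def algebra_simps)
  then show False
    using regular_strict boundary_util2_zero_price_nonpos[OF eq slack l2]
      mult_nonneg_nonpos[of c "util2 l1 0 0"] c_pos by linarith
qed

text \<open>In the corner, SA 2 is priced out at \<open>p\<^sub>2 = 0\<close>, so SA 1 may only deviate upwards; the
  threshold supplies the opposite inequality.\<close>

lemma boundary_equilibrium_foc:
  assumes eq: "price_equilibrium \<Lambda> p1 p2 l1 l2" and slack: "l1 + l2 < \<Lambda>" and l2: "l2 = 0"
  shows "p2 = 0" "det*l1 = d*p1"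
proof -
  have flow: "flow_eq \<Lambda> p1 p2 l1 l2" and "0 \<le> p1" "0 \<le> p2"
    using eq by (simp_all add: price_equilibrium_def)
  have "0 < l1" using eq slack by (rule equilibrium_first_flow_pos)
  then have U1: "util1 l1 0 p1 = 0" using flow_eq_slackD(5)[OF flow slack] l2 by simp
  have U2: "util2 l1 0 p2 = 0" using eq slack l2 by (rule boundary_util2_zero)
  moreover have "util2 l1 0 0 \<le> 0" using eq slack l2 by (rule boundary_util2_zero_price_nonpos)
  ultimately have "p2 = 0" and bl1: "b*l1 = a2" using \<open>0 \<le> p2\<close> by (simp_all add: util2_def)
  then show "p2 = 0" by simp
  from bl1 have "0 < b" using a2_pos b_nonneg by (cases "b = 0") auto
  have "\<forall>\<^sub>F s in at 0. 0 < l1 - d*s \<and> 0 < \<Lambda> - l1 + (d - b)*s"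
    using \<open>0 < l1\<close> slack l2
    by (intro eventually_conj eventually_at_zero_pos) (auto intro!: continuous_intros)
  then have "\<forall>\<^sub>F s in at_right 0. 0 < s \<and> 0 < l1 - d*s \<and> 0 < \<Lambda> - l1 + (d - b)*s"
    by (rule eventually_at_right_zero)
  then have "\<forall>\<^sub>F s in at_right 0. (p1 + det*s) * (l1 - d*s) \<le> p1*l1"
  proof eventually_elim
    case (elim s)
    have "0 \<le> p1 + det*s" using \<open>0 \<le> p1\<close> mult_pos_pos[OF det_pos, of s] elim by simp
    moreover have "0 \<le> b*s" using b_nonneg elim by simp
    ultimately show ?case
      using elim by (intro shift1_revenue_le[OF eq U1 U2]) (auto simp: algebra_simps)
  qed
  then have "det*l1 \<le> d*p1" by (rule product_local_max_at_right)
  moreover have "b*(d*p1 - det*l1) = b*(d*a1 + b*a2) - 2*c*d*a2"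
    using U1 bl1 by (simp add: util1_def algebra_simps power2_eq_square)
  then have "b*(d*p1 - det*l1) \<le> 0" using regular by simp
  then have "d*p1 - det*l1 \<le> 0" using \<open>0 < b\<close> by (simp add: mult_le_0_iff)
  ultimately show "det*l1 = d*p1" by simp
qed

lemma equilibrium_conditions:
  assumes eq: "price_equilibrium \<Lambda> p1 p2 l1 l2" and slack: "l1 + l2 < \<Lambda>"
  shows "util1 l1 l2 p1 = 0" "util2 l1 l2 p2 = 0" "det*l1 = d*p1" "det*l2 = c*p2"
proof -
  have flow: "flow_eq \<Lambda> p1 p2 l1 l2" using eq by (simp add: price_equilibrium_def)
  have "0 < l1" using eq slack by (rule equilibrium_first_flow_pos)
  then show "util1 l1 l2 p1 = 0" by (rule flow_eq_slackD(5)[OF flow slack])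
  consider "0 < l2" | "l2 = 0" using flow_eq_slackD(2)[OF flow slack] by linarith
  then have "util2 l1 l2 p2 = 0 \<and> det*l1 = d*p1 \<and> det*l2 = c*p2"
  proof cases
    case 1
    then show ?thesis
      using flow_eq_slackD(6)[OF flow slack] interior_equilibrium_foc[OF eq slack \<open>0 < l1\<close>] by auto
  next
    case 2
    then show ?thesis using boundary_equilibrium_foc[OF eq slack] boundary_util2_zero[OF eq slack] by auto
  qed
  then show "util2 l1 l2 p2 = 0" "det*l1 = d*p1" "det*l2 = c*p2" by simp_all
qed

lemma equilibrium_prices:
  assumes "price_equilibrium \<Lambda> p1 p2 l1 l2" and "l1 + l2 < \<Lambda>"
  shows "p1 = (2*c*(d*a1 - b*a2) + b*(c*a2 - b*a1)) / (4*c*d - b^2)"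
    and "p2 = (2*d*(c*a2 - b*a1) + b*(d*a1 - b*a2)) / (4*c*d - b^2)"
proof -
  note cond = equilibrium_conditions[OF assms]
  have "d*util1 l1 l2 p1 - b*util2 l1 l2 p2 = d*a1 - b*a2 - det*l1 - d*p1 + b*p2"
    and "c*util2 l1 l2 p2 - b*util1 l1 l2 p1 = c*a2 - b*a1 - det*l2 - c*p2 + b*p1"
    by (simp_all add: util1_def util2_def algebra_simps power2_eq_square)
  then have lin1: "2*d*p1 - b*p2 = d*a1 - b*a2" and lin2: "2*c*p2 - b*p1 = c*a2 - b*a1"
    using cond by simp_all
  have "0 < c*d" using c_pos d_pos by simp
  then have "4*c*d - b^2 \<noteq> 0" using cross_sq_less by simp
  moreover have "p1*(4*c*d - b^2) = 2*c*(2*d*p1 - b*p2) + b*(2*c*p2 - b*p1)"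
    and "p2*(4*c*d - b^2) = 2*d*(2*c*p2 - b*p1) + b*(2*d*p1 - b*p2)"
    by (simp_all add: algebra_simps power2_eq_square)
  ultimately show "p1 = (2*c*(d*a1 - b*a2) + b*(c*a2 - b*a1)) / (4*c*d - b^2)"
    and "p2 = (2*d*(c*a2 - b*a1) + b*(d*a1 - b*a2)) / (4*c*d - b^2)"
    by (simp_all add: eq_divide_eq lin1 lin2)
qed

end

locale esc_game =
  fixes v qA qB \<alpha> W L :: real
  assumes L_less_W: "L < W" and L_pos: "0 < L" and v_pos: "0 < v"
    and qB_pos: "0 < qB" and qB_less_qA: "qB < qA"
    and \<alpha>_nonneg: "0 \<le> \<alpha>" and \<alpha>_less_1: "\<alpha> < 1"
    and threshold: "(W - L) / L \<ge> (qB * \<alpha>^2 + qB * \<alpha> - 2 * qA * \<alpha>^2) / (2 * qA * (1 - \<alpha>)^2)"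

sublocale esc_game \<subseteq> regular_linear_duopoly "qB*v" "qA*v"
    "qB*(\<alpha>^2/(W - L) + (1 - \<alpha>)^2/L)" "qB*\<alpha>/(W - L)" "qA/(W - L)"
proof unfold_locales
  define D where "D = W - L"
  have D: "0 < D" using L_less_W by (simp add: D_def)
  have "0 < (1 - \<alpha>)^2" using \<alpha>_less_1 by simp
  note pos = D L_pos v_pos qB_pos qB_less_qA \<alpha>_nonneg \<alpha>_less_1 this
  show "0 < qB*(\<alpha>^2/(W - L) + (1 - \<alpha>)^2/L)" "0 < qA/(W - L)" "0 \<le> qB*\<alpha>/(W - L)"
    "0 < qB*v" "0 < qA*v"
    using pos by (simp_all flip: D_def add: add_nonneg_pos)
  show "qB*\<alpha>/(W - L) * (qA*v) < qA/(W - L) * (qB*v)"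
    using pos by (simp flip: D_def add: field_simps)
  have "qA/D * (qB*(\<alpha>^2/D + (1 - \<alpha>)^2/L)) - (qB*\<alpha>/D)^2
      = qB/D * ((qA - qB)*\<alpha>^2/D + qA*(1 - \<alpha>)^2/L)"
    using pos by (simp add: field_simps power2_eq_square)
  moreover have "0 < qB/D * ((qA - qB)*\<alpha>^2/D + qA*(1 - \<alpha>)^2/L)"
    using pos by (intro mult_pos_pos add_nonneg_pos) simp_all
  ultimately show "(qB*\<alpha>/(W - L))^2 < qB*(\<alpha>^2/(W - L) + (1 - \<alpha>)^2/L) * (qA/(W - L))"
    by (simp flip: D_def add: mult.commute)
  have "qB*\<alpha>^2 + qB*\<alpha> - 2*qA*\<alpha>^2 \<le> D/L * (2*qA*(1 - \<alpha>)^2)"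
    using threshold pos by (simp flip: D_def add: divide_le_eq)
  then have "0 \<le> qA*qB*v/D^2 * (D/L * (2*qA*(1 - \<alpha>)^2) - (qB*\<alpha>^2 + qB*\<alpha> - 2*qA*\<alpha>^2))"
    using pos by simp
  also have "\<dots> = 2*(qB*(\<alpha>^2/D + (1 - \<alpha>)^2/L))*(qA/D)*(qA*v) - qB*\<alpha>/D*(qA/D*(qB*v) + qB*\<alpha>/D*(qA*v))"
    using pos by (simp add: field_simps power2_eq_square)
  finally show "qB*\<alpha>/(W - L) * (qA/(W - L) * (qB*v) + qB*\<alpha>/(W - L) * (qA*v))
      \<le> 2*(qB*(\<alpha>^2/(W - L) + (1 - \<alpha>)^2/L))*(qA/(W - L))*(qA*v)"
    by (simp add: D_def)
qed

context esc_game
begin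

lemma price_eq_iff_price_equilibrium:
  "price_eq v qA qB \<alpha> W L \<Lambda> p1 p2 l1 l2 \<longleftrightarrow> price_equilibrium \<Lambda> p1 p2 l1 l2"
proof -
  have "payoff1 v qA qB \<alpha> W L = util1" "payoff2 v qA qB \<alpha> W L = util2"
    unfolding fun_eq_iff payoff1_def payoff2_def util1_def util2_def
    by (simp_all add: algebra_simps add_divide_distrib power2_eq_square)
  then have "wardrop v qA qB \<alpha> W L \<Lambda> = flow_eq \<Lambda>"
    by (simp add: fun_eq_iff wardrop_def flow_eq_def)
  then show ?thesis by (simp add: price_eq_def price_equilibrium_def)
qed

lemma price_eq_prices:
  assumes "price_eq v qA qB \<alpha> W L \<Lambda> p1 p2 l1 l2" and "l1 + l2 < \<Lambda>"
  shows "p1 = v * ((2 * qB * qA * \<alpha>^2 - qB * qA * \<alpha>^3 - qB^2 * \<alpha>^2) / (W - L)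
                   + (1 - \<alpha>)^2 * (2 - \<alpha>) * qA * qB / L)
              / (4 * qA * (\<alpha>^2 / (W - L) + (1 - \<alpha>)^2 / L) - qB * \<alpha>^2 / (W - L))
       \<and> p2 = v * ((2 * qA^2 * \<alpha>^2 - qA * qB * \<alpha>^2 - qA * qB * \<alpha>) / (W - L)
                   + 2 * qA^2 * (1 - \<alpha>)^2 / L)
              / (4 * qA * (\<alpha>^2 / (W - L) + (1 - \<alpha>)^2 / L) - qB * \<alpha>^2 / (W - L))"
proof -
  define D where "D = W - L"
  have "D \<noteq> 0" "L \<noteq> 0" "qB/D \<noteq> 0" using L_less_W L_pos qB_pos by (simp_all add: D_def)
  define c b d where "c = qB*(\<alpha>^2/D + (1 - \<alpha>)^2/L)" and "b = qB*\<alpha>/D" and "d = qA/D"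
  note prices = equilibrium_prices[OF assms(1)[unfolded price_eq_iff_price_equilibrium] assms(2),
      folded D_def, folded c_def b_def d_def]
  have "4*c*d - b^2 = qB/D * (4 * qA * (\<alpha>^2 / D + (1 - \<alpha>)^2 / L) - qB * \<alpha>^2 / D)"
    using \<open>D \<noteq> 0\<close> \<open>L \<noteq> 0\<close> by (simp add: c_def b_def d_def field_simps power2_eq_square)
  moreover have "2*c*(d*(qB*v) - b*(qA*v)) + b*(c*(qA*v) - b*(qB*v))
      = qB/D * (v * ((2 * qB * qA * \<alpha>^2 - qB * qA * \<alpha>^3 - qB^2 * \<alpha>^2) / D
                   + (1 - \<alpha>)^2 * (2 - \<alpha>) * qA * qB / L))"
    using \<open>D \<noteq> 0\<close> \<open>L \<noteq> 0\<close>
    by (simp add: c_def b_def d_def field_simps power2_eq_square power3_eq_cube)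
  moreover have "2*d*(c*(qA*v) - b*(qB*v)) + b*(d*(qB*v) - b*(qA*v))
      = qB/D * (v * ((2 * qA^2 * \<alpha>^2 - qA * qB * \<alpha>^2 - qA * qB * \<alpha>) / D
                   + 2 * qA^2 * (1 - \<alpha>)^2 / L))"
    using \<open>D \<noteq> 0\<close> \<open>L \<noteq> 0\<close>
    by (simp add: c_def b_def d_def field_simps power2_eq_square power3_eq_cube)
  ultimately show ?thesis
    using prices \<open>qB/D \<noteq> 0\<close> by (simp add: D_def)
qed

end

theorem lemma6:
  fixes v qA qB \<alpha> W L \<Lambda> p1 p2 l1 l2 :: real
  assumes "W > L" and "L > 0" and "\<Lambda> > 0" and "v > 0"
    and "0 < qB" and "qB < qA" and "qA \<le> 1"
    and "0 \<le> \<alpha>" and "\<alpha> < 1"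
    and "(W - L) / L \<ge> (qB * \<alpha>^2 + qB * \<alpha> - 2 * qA * \<alpha>^2) / (2 * qA * (1 - \<alpha>)^2)"
    and "price_eq v qA qB \<alpha> W L \<Lambda> p1 p2 l1 l2"
    and "l1 + l2 < \<Lambda>"
  shows "p1 = v * ((2 * qB * qA * \<alpha>^2 - qB * qA * \<alpha>^3 - qB^2 * \<alpha>^2) / (W - L)
                   + (1 - \<alpha>)^2 * (2 - \<alpha>) * qA * qB / L)
              / (4 * qA * (\<alpha>^2 / (W - L) + (1 - \<alpha>)^2 / L) - qB * \<alpha>^2 / (W - L))
       \<and> p2 = v * ((2 * qA^2 * \<alpha>^2 - qA * qB * \<alpha>^2 - qA * qB * \<alpha>) / (W - L)
                   + 2 * qA^2 * (1 - \<alpha>)^2 / L)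
              / (4 * qA * (\<alpha>^2 / (W - L) + (1 - \<alpha>)^2 / L) - qB * \<alpha>^2 / (W - L))"
proof -
  interpret esc_game v qA qB \<alpha> W L
    using assms(1,2,4-6,8-10) by unfold_locales
  show ?thesis using assms(11,12) by (rule price_eq_prices)
qed

end
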